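(* Let $a\ge 1$ and let $d$ be an odd integer with $d<a$. Then $U=\{(a,0),(0,0)\}\cup\{(c,d)\in\mathcal{B}\mid \max\{c,c+d\}<a\}$ is avoidable.
   Context: The bicyclic inverse semigroup is $\mathcal{B}=\{(a,b)\in\mathbb{Z}\times\mathbb{Z}\mid a\ge 0,\ a+b\ge 0\}$ with multiplication $(a,b)(c,d)=(\max\{c+d,a\}-d,\ b+d)$. A subset $U\subseteq\mathcal{B}$ is called avoidable if $\mathcal{B}$ can be partitioned into two subsets $A$ and $B$ such that no element of $U$ can be written as a product $xy$ of two distinct elements $x\neq y$ both in $A$, or both in $B$. *)

theory Defs
  imports Main
begin

definition bicyclic :: "(int \<times> int) set" where
  "bicyclic = {(a, b). a \<ge> 0 \<and> a + b \<ge> 0}"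

fun bmult :: "int \<times> int \<Rightarrow> int \<times> int \<Rightarrow> int \<times> int" where
  "bmult (a, b) (c, d) = (max (c + d) a - d, b + d)"

definition avoidable :: "(int \<times> int) set \<Rightarrow> bool" where
  "avoidable U \<longleftrightarrow> (\<exists>A B. A \<union> B = bicyclic \<and> A \<inter> B = {} \<and>
     (\<forall>x\<in>A. \<forall>y\<in>A. x \<noteq> y \<longrightarrow> bmult x y \<notin> U) \<and>
     (\<forall>x\<in>B. \<forall>y\<in>B. x \<noteq> y \<longrightarrow> bmult x y \<notin> U))"

end

theory Submission
  imports Defs
begin

text \<open>Colour \<open>(a, 0)\<close> by itself and every other element by its second coordinate \<open>q\<close>,
using a 2-colouring of \<open>\<int>\<close> in which \<open>q\<close> and \<open>-q\<close> (for \<open>q \<noteq> 0\<close>) as well as \<open>q\<close> and \<open>d - q\<close>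
always get different colours. A product of \<open>(p\<^sub>1, q\<^sub>1)\<close> and \<open>(p\<^sub>2, q\<^sub>2)\<close> has second
coordinate \<open>q\<^sub>1 + q\<^sub>2\<close>, so landing in \<open>U\<close> forces \<open>q\<^sub>2 = -q\<^sub>1\<close> or \<open>q\<^sub>2 = d - q\<^sub>1\<close>; the colouring
separates such factors unless one of them is \<open>(a, 0)\<close> or \<open>q\<^sub>1 = q\<^sub>2 = 0\<close>, and those cases are
settled by comparing first coordinates.
Such a colouring of \<open>\<int>\<close> exists because \<open>d\<close> is odd: for \<open>q\<close> not divisible by \<open>d\<close> compare the residue of \<open>q\<close>
modulo \<open>\<bar>d\<bar>\<close> with \<open>\<bar>d\<bar>/2\<close>, and on multiples \<open>k d\<close> use the sign of \<open>k\<close>.\<close>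

definition half_residue_colour :: "int \<Rightarrow> int \<Rightarrow> bool" where
  "half_residue_colour d q =
     (if d dvd q then 0 < q * d else 2 * (q mod \<bar>d\<bar>) < \<bar>d\<bar>)"

lemma half_residue_colour_zero: "\<not> half_residue_colour d 0"
  by (simp add: half_residue_colour_def)

lemma half_residue_colour_flip_residue:
  fixes d q r :: int
  assumes "odd d" and "\<not> d dvd q" and "r mod \<bar>d\<bar> = (-q) mod \<bar>d\<bar>"
  shows "half_residue_colour d r \<longleftrightarrow> \<not> half_residue_colour d q"
proof -
  define D where "D = \<bar>d\<bar>"
  have "D > 0" "odd D" using assms(1) by (auto simp: D_def)
  have "\<not> D dvd q" using assms(2) by (simp add: D_def)
  then have q: "q mod D \<noteq> 0" by (simp add: dvd_eq_mod_eq_0)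
  have r: "r mod D = D - q mod D"
    using assms(3) q by (simp add: D_def zmod_zminus1_eq_if)
  have q_bounds: "0 \<le> q mod D" "q mod D < D" using \<open>D > 0\<close> by auto
  then have "\<not> D dvd r" using q r by (simp add: dvd_eq_mod_eq_0)
  then have "\<not> d dvd r" by (simp add: D_def)
  have "2 * (q mod D) \<noteq> D" using \<open>odd D\<close> by (metis dvd_triv_left)
  then show ?thesis
    using q_bounds r assms(2) \<open>\<not> d dvd r\<close>
    by (simp add: half_residue_colour_def D_def[symmetric]) linarith
qed

lemma half_residue_colour_uminus:
  fixes d q :: int
  assumes "odd d" and "q \<noteq> 0"
  shows "half_residue_colour d (-q) \<longleftrightarrow> \<not> half_residue_colour d q"
proof (cases "d dvd q")
  case True
  have "d \<noteq> 0" using assms(1) by auto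
  then have "q * d \<noteq> 0" using assms(2) by simp
  then have "0 < -q * d \<longleftrightarrow> \<not> 0 < q * d" by linarith
  then show ?thesis using True by (simp add: half_residue_colour_def)
next
  case False
  then show ?thesis using half_residue_colour_flip_residue[OF assms(1) False] by simp
qed

lemma half_residue_colour_diff:
  fixes d q :: int
  assumes "odd d"
  shows "half_residue_colour d (d - q) \<longleftrightarrow> \<not> half_residue_colour d q"
proof (cases "d dvd q")
  case True
  then obtain k where k: "q = d * k" by (auto simp: dvd_def)
  have "d \<noteq> 0" using assms by auto
  then have "0 < d * d" by (metis linorder_neq_iff mult_neg_neg mult_pos_pos)
  moreover have "q * d = d * d * k" "(d - q) * d = d * d * (1 - k)"
    unfolding k by (simp_all add: algebra_simps)
  ultimately have "0 < q * d \<longleftrightarrow> 0 < k" "0 < (d - q) * d \<longleftrightarrow> 0 < 1 - k"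
    by (metis mult_pos_pos zero_less_mult_pos)+
  then show ?thesis using True by (auto simp: half_residue_colour_def)
next
  case False
  have "d mod \<bar>d\<bar> = 0" by simp
  then have "(d - q) mod \<bar>d\<bar> = (-q) mod \<bar>d\<bar>"
    by (metis diff_0 mod_diff_left_eq)
  then show ?thesis using half_residue_colour_flip_residue[OF assms False] by simp
qed

lemma bmult_snd: "snd (bmult x y) = snd x + snd y"
  by (cases x; cases y) simp

lemma bmult_fst_ge_right: "fst y \<le> fst (bmult x y)"
  by (cases x; cases y) simp

lemma bmult_fst_ge_left: "fst x \<le> fst (bmult x y) + snd y"
  by (cases x; cases y) simp

lemma bmult_right_snd_zero: "bmult x (p, 0) = (max (fst x) p, snd x)"
  by (cases x) (simp add: max.commute)

lemma avoidable_if_colouring: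
  fixes P :: "int \<times> int \<Rightarrow> bool"
  assumes "\<And>x y. x \<in> bicyclic \<Longrightarrow> y \<in> bicyclic \<Longrightarrow> x \<noteq> y \<Longrightarrow> P x = P y \<Longrightarrow> bmult x y \<notin> U"
  shows "avoidable U"
  unfolding avoidable_def
  by (rule exI[of _ "{x \<in> bicyclic. P x}"], rule exI[of _ "{x \<in> bicyclic. \<not> P x}"])
    (use assms in auto)

definition split_colour :: "int \<Rightarrow> int \<Rightarrow> int \<times> int \<Rightarrow> bool" where
  "split_colour a d x \<longleftrightarrow> x = (a, 0) \<or> half_residue_colour d (snd x)"

lemma split_colour_eq_half_residue:
  "x \<noteq> (a, 0) \<Longrightarrow> split_colour a d x \<longleftrightarrow> half_residue_colour d (snd x)"
  by (simp add: split_colour_def)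

lemma split_colour_product_not_idempotent:
  assumes "odd d" and "x \<in> bicyclic" and "y \<in> bicyclic" and "x \<noteq> y"
    and "split_colour a d x = split_colour a d y" and "snd x + snd y = 0"
  shows "bmult x y \<notin> {(a, 0), (0, 0)}"
proof (cases "snd x = 0")
  case True
  obtain p1 p2 where x: "x = (p1, 0)" and y: "y = (p2, 0)"
    using True assms(6) by (metis add_0 prod.collapse)
  have "0 \<le> p1" "0 \<le> p2" using assms(2,3) by (auto simp: x y bicyclic_def)
  moreover have "split_colour a d (p, 0) \<longleftrightarrow> p = a" for p
    using half_residue_colour_zero by (simp add: split_colour_def)
  ultimately show ?thesis
    using assms(4,5) by (auto simp: x y bmult_right_snd_zero max_def split: if_splits)
next
  case False
  then have "snd y = - snd x" "snd y \<noteq> 0" using assms(6) by auto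
  moreover have "x \<noteq> (a, 0)" "y \<noteq> (a, 0)" using False \<open>snd y \<noteq> 0\<close> by auto
  ultimately have "split_colour a d y \<longleftrightarrow> \<not> split_colour a d x"
    using half_residue_colour_uminus[OF assms(1) False] by (simp add: split_colour_eq_half_residue)
  then show ?thesis using assms(5) by simp
qed

lemma split_colour_product_not_low:
  assumes "odd d" and "split_colour a d x = split_colour a d y" and "snd x + snd y = d"
  shows "\<not> max (fst (bmult x y)) (fst (bmult x y) + d) < a"
proof
  assume low: "max (fst (bmult x y)) (fst (bmult x y) + d) < a"
  have "y \<noteq> (a, 0)" using low bmult_fst_ge_right[of y x] by auto
  moreover have "x \<noteq> (a, 0)"
  proof
    assume "x = (a, 0)"
    then show False using low assms(3) bmult_fst_ge_left[of x y] by auto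
  qed
  moreover have "snd y = d - snd x" using assms(3) by simp
  ultimately show False
    using assms(2) half_residue_colour_diff[OF assms(1)] by (simp add: split_colour_eq_half_residue)
qed

theorem proposition5p4:
  fixes a d :: int
  assumes "a \<ge> 1" and "odd d" and "d < a"
  shows "avoidable ({(a, 0), (0, 0)} \<union> {(c, d') \<in> bicyclic. d' = d \<and> max c (c + d) < a})"
proof (rule avoidable_if_colouring[where P = "split_colour a d"])
  fix x y
  assume "x \<in> bicyclic" "y \<in> bicyclic" "x \<noteq> y" and same: "split_colour a d x = split_colour a d y"
  then have "bmult x y \<notin> {(a, 0), (0, 0)}" if "snd x + snd y = 0"
    using split_colour_product_not_idempotent[OF assms(2)] that by blast
  moreover have "\<not> max (fst (bmult x y)) (fst (bmult x y) + d) < a" if "snd x + snd y = d"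
    using split_colour_product_not_low[OF assms(2) same that] .
  ultimately show "bmult x y \<notin> {(a, 0), (0, 0)} \<union> {(c, d') \<in> bicyclic. d' = d \<and> max c (c + d) < a}"
    using bmult_snd[of x y] by (cases "bmult x y") auto
qed

end
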